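(* Let $G=(V,E)$ be a graph with no isolated vertices, $m\ge1$ edges, and exactly $L$ vertices of degree $1$. Let $\mathcal{L}$ be the partition produced by the Following algorithm with parameter $d_0=1$ (described in the context). Then $$Q(\mathcal{L})\ \ge\ \frac{L}{2m}-\frac{\sum_{i=1}^n d_i^2}{m^2}.$$
   Context: $G=(V,E)$ is an undirected simple graph, $V=\{1,\dots,n\}$, $m=|E|\ge1$, adjacency matrix $A$, degrees $d_i$. For a partition $\mathcal{C}$ of $V$ into nonempty communities, its modularity is $Q(\mathcal{C})=\frac{1}{2m}\sum_{i,j}\left(A_{i,j}-\frac{d_id_j}{2m}\right)\delta_{i,j}$, the sum over all ordered pairs $(i,j)$ including $i=j$, where $\delta_{i,j}=1$ if $i,j$ lie in the same community and $0$ otherwise. Following algorithm with parameter $d_0=1$: start with all vertices unlabeled; process vertices in non-decreasing order of degree; for each vertex $v$ that is still unlabeled when processed and has $d_v\le 1$, let $u$ be a neighbor of $v$ not labeled "follower" (if several, one of minimum degree) and set $v$ to follow $u$, labeling $v$ "follower" and $u$ "followee"; after this pass, label every still-unlabeled vertex "followee"; finally, form one community for each followee, consisting of the followee together with all vertices that follow it. *)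

theory Defs
  imports Complex_Main
begin

definition simple_graph :: "nat \<Rightarrow> (nat \<Rightarrow> nat \<Rightarrow> bool) \<Rightarrow> bool" where
  "simple_graph n E \<longleftrightarrow>
     (\<forall>i j. E i j \<longrightarrow> i \<in> {1..n} \<and> j \<in> {1..n}) \<and>
     (\<forall>i j. E i j \<longrightarrow> E j i) \<and> (\<forall>i. \<not> E i i)"

definition adjm :: "(nat \<Rightarrow> nat \<Rightarrow> bool) \<Rightarrow> nat \<Rightarrow> nat \<Rightarrow> real" where
  "adjm E i j = (if E i j then 1 else 0)"

definition deg :: "nat \<Rightarrow> (nat \<Rightarrow> nat \<Rightarrow> bool) \<Rightarrow> nat \<Rightarrow> nat" where
  "deg n E i = card {j \<in> {1..n}. E i j}"

definition edges :: "nat \<Rightarrow> (nat \<Rightarrow> nat \<Rightarrow> bool) \<Rightarrow> nat set set" where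
  "edges n E = {{i, j} | i j. i \<in> {1..n} \<and> j \<in> {1..n} \<and> E i j}"

definition num_edges :: "nat \<Rightarrow> (nat \<Rightarrow> nat \<Rightarrow> bool) \<Rightarrow> nat" where
  "num_edges n E = card (edges n E)"

text \<open>Modularity of a partition C (a set of communities) of {1..n}; the sum runs over all
  ordered pairs (i,j), including i = j.\<close>

definition modularity :: "nat \<Rightarrow> (nat \<Rightarrow> nat \<Rightarrow> bool) \<Rightarrow> nat set set \<Rightarrow> real" where
  "modularity n E C =
     (let m = real (num_edges n E) in
      (1 / (2 * m)) * (\<Sum>i\<in>{1..n}. \<Sum>j\<in>{1..n}.
         (adjm E i j - real (deg n E i) * real (deg n E j) / (2 * m)) *
         (if \<exists>c\<in>C. i \<in> c \<and> j \<in> c then 1 else 0)))"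

text \<open>The Following algorithm with parameter d0 = 1.\<close>

datatype label = Unlabeled | Follower | Followee

type_synonym fstate = "(nat \<Rightarrow> label) \<times> (nat \<Rightarrow> nat)"

text \<open>Processing a single vertex v. The choice of u among the admissible neighbours of
  minimum degree is nondeterministic.\<close>

inductive fol_step :: "nat \<Rightarrow> (nat \<Rightarrow> nat \<Rightarrow> bool) \<Rightarrow> fstate \<Rightarrow> nat \<Rightarrow> fstate \<Rightarrow> bool"
  for n E where
  skip: "\<not> (lab v = Unlabeled \<and> deg n E v \<le> 1 \<and> (\<exists>u. E v u \<and> lab u \<noteq> Follower))
         \<Longrightarrow> fol_step n E (lab, f) v (lab, f)"
| follow: "lab v = Unlabeled \<Longrightarrow> deg n E v \<le> 1 \<Longrightarrow> E v u \<Longrightarrow> lab u \<noteq> Follower \<Longrightarrow>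
         (\<forall>w. E v w \<and> lab w \<noteq> Follower \<longrightarrow> deg n E u \<le> deg n E w) \<Longrightarrow>
         fol_step n E (lab, f) v (lab(v := Follower, u := Followee), f(v := u))"

inductive fol_run :: "nat \<Rightarrow> (nat \<Rightarrow> nat \<Rightarrow> bool) \<Rightarrow> fstate \<Rightarrow> nat list \<Rightarrow> fstate \<Rightarrow> bool"
  for n E where
  nil: "fol_run n E s [] s"
| cons: "fol_step n E s v s' \<Longrightarrow> fol_run n E s' vs s'' \<Longrightarrow> fol_run n E s (v # vs) s''"

definition degree_order :: "nat \<Rightarrow> (nat \<Rightarrow> nat \<Rightarrow> bool) \<Rightarrow> nat list \<Rightarrow> bool" where
  "degree_order n E vs \<longleftrightarrow> distinct vs \<and> set vs = {1..n} \<and> sorted (map (deg n E) vs)"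

definition following_partition :: "nat \<Rightarrow> fstate \<Rightarrow> nat set set" where
  "following_partition n s =
     (let lab' = (\<lambda>v. if fst s v = Unlabeled then Followee else fst s v) in
      (\<lambda>u. {u} \<union> {v \<in> {1..n}. lab' v = Follower \<and> snd s v = u}) ` {u \<in> {1..n}. lab' u = Followee})"

definition following_output :: "nat \<Rightarrow> (nat \<Rightarrow> nat \<Rightarrow> bool) \<Rightarrow> nat set set \<Rightarrow> bool" where
  "following_output n E C \<longleftrightarrow>
     (\<exists>vs s f0. degree_order n E vs \<and> fol_run n E (\<lambda>_. Unlabeled, f0) vs s \<and>
                C = following_partition n s)"

end

theory Submission
  imports Defs
begin

(* Write V = {1..n}, d_i for the degrees, F for the number of followers and
   S = sum_i d_i^2.  A run of the Following algorithm produces a follower structure: every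
   follower v is a leaf (d_v <= 1) adjacent to a non-follower f(v), and every leaf that is not
   a follower is followed by somebody.  The communities are the non-followers u together with
   their followers.
   Combining, Q >= (2F - 4S/(2m)) / (2m) = F/m - S/m^2 >= L/(2m) - S/m^2.
   The first section extracts the follower structure from a run of the algorithm through a
   loop invariant; the second proves the three counting facts for an arbitrary follower
   structure and combines them into the bound; the main theorem chains the two. *)

section \<open>The follower structure produced by the algorithm\<close>

text \<open>Abstract outcome of the algorithm: \<open>fol\<close> marks followers, \<open>f\<close> gives whom they follow.\<close>

definition follower_structure ::
    "nat \<Rightarrow> (nat \<Rightarrow> nat \<Rightarrow> bool) \<Rightarrow> (nat \<Rightarrow> bool) \<Rightarrow> (nat \<Rightarrow> nat) \<Rightarrow> bool" where
  "follower_structure n E fol f \<longleftrightarrow>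
     (\<forall>v. fol v \<longrightarrow> E v (f v) \<and> deg n E v \<le> 1 \<and> \<not> fol (f v)) \<and>
     (\<forall>w\<in>{1..n}. deg n E w = 1 \<and> \<not> fol w \<longrightarrow> (\<exists>x. fol x \<and> f x = w))"

definition follower_community :: "nat \<Rightarrow> (nat \<Rightarrow> bool) \<Rightarrow> (nat \<Rightarrow> nat) \<Rightarrow> nat \<Rightarrow> nat set" where
  "follower_community n fol f u = {u} \<union> {v \<in> {1..n}. fol v \<and> f v = u}"

definition follower_communities :: "nat \<Rightarrow> (nat \<Rightarrow> bool) \<Rightarrow> (nat \<Rightarrow> nat) \<Rightarrow> nat set set" where
  "follower_communities n fol f = follower_community n fol f ` {u \<in> {1..n}. \<not> fol u}"

definition following_invariant :: "nat \<Rightarrow> (nat \<Rightarrow> nat \<Rightarrow> bool) \<Rightarrow> fstate \<Rightarrow> bool" where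
  "following_invariant n E s \<longleftrightarrow>
     (\<forall>v. fst s v = Follower \<longrightarrow>
        E v (snd s v) \<and> deg n E v \<le> 1 \<and> fst s (snd s v) = Followee) \<and>
     (\<forall>u. fst s u = Followee \<longrightarrow> (\<exists>v. fst s v = Follower \<and> snd s v = u))"

lemma label_cases_labelled: "x \<noteq> Follower \<Longrightarrow> x \<noteq> Unlabeled \<Longrightarrow> x = Followee"
  by (cases x) auto

lemma leaf_neighbour_unique:
  assumes "simple_graph n E" "deg n E u \<le> 1" "E u a" "E u b"
  shows "a = b"
proof -
  have "a \<in> {j \<in> {1..n}. E u j}" "b \<in> {j \<in> {1..n}. E u j}"
    using assms unfolding simple_graph_def by auto
  moreover have "card {j \<in> {1..n}. E u j} \<le> 1" using assms(2) unfolding deg_def .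
  ultimately show ?thesis using card_le_Suc0_iff_eq[of "{j \<in> {1..n}. E u j}"] by auto
qed

lemma degree_one_has_neighbour:
  assumes "deg n E v = 1" shows "\<exists>u. E v u"
proof -
  have "card {j \<in> {1..n}. E v j} = 1" using assms unfolding deg_def .
  then obtain x where "{j \<in> {1..n}. E v j} = {x}" using card_1_singletonE by blast
  then show ?thesis by auto
qed

lemma fol_step_keeps_labels:
  assumes "fol_step n E s v s'" "fst s w \<noteq> Unlabeled"
  shows "fst s' w \<noteq> Unlabeled"
  using assms by cases auto

lemma fol_step_invariant:
  assumes "fol_step n E s v s'" "simple_graph n E" "following_invariant n E s"
  shows "following_invariant n E s'"
  using assms(1)
proof cases
  case (skip lab f)
  then show ?thesis using assms(3) by simp
next
  case (follow lab u f)
  have uv: "u \<noteq> v" using follow(5) assms(2) unfolding simple_graph_def by auto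
  have fol: "\<And>w. lab w = Follower \<Longrightarrow> E w (f w) \<and> deg n E w \<le> 1 \<and> lab (f w) = Followee"
    and fee: "\<And>w. lab w = Followee \<Longrightarrow> \<exists>x. lab x = Follower \<and> f x = w"
    using assms(3) follow(1) unfolding following_invariant_def by auto
  let ?l = "lab(v := Follower, u := Followee)" and ?f = "f(v := u)"
  have "E w (?f w) \<and> deg n E w \<le> 1 \<and> ?l (?f w) = Followee" if w: "?l w = Follower" for w
  proof (cases "w = v")
    case False
    then have "lab w = Follower" using w by (auto split: if_splits)
    with fol[of w] follow(3) False show ?thesis by (auto split: if_splits)
  qed (use follow uv in auto)
  moreover have "\<exists>x. ?l x = Follower \<and> ?f x = w" if w: "?l w = Followee" for w
  proof (cases "w = u")
    case False
    then have "w \<noteq> v" "lab w = Followee" using w by (auto split: if_splits)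
    then obtain x where x: "lab x = Follower" "f x = w" using fee by blast
    then have "x \<noteq> v" "x \<noteq> u" using follow(3,6) by auto
    then show ?thesis using x by (intro exI[of _ x]) auto
  qed (use uv in \<open>intro exI[of _ v], auto\<close>)
  ultimately show ?thesis using follow(2) unfolding following_invariant_def by simp
qed

text \<open>A vertex of degree one is labelled after being processed: if it is skipped while
  unlabelled, its unique neighbour is a follower, but that neighbour would have to follow it.\<close>

lemma fol_step_labels_leaf:
  assumes "fol_step n E s v s'" "simple_graph n E" "following_invariant n E s"
    and "deg n E v = 1"
  shows "fst s' v \<noteq> Unlabeled"
  using assms(1)
proof cases
  case (skip lab f)
  show ?thesis
  proof
    assume unl: "fst s' v = Unlabeled"
    obtain u where u: "E v u" using degree_one_has_neighbour[OF assms(4)] by blast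
    have "lab u = Follower" using skip unl assms(4) u by auto
    then have "E u (f u)" "deg n E u \<le> 1" "lab (f u) = Followee"
      using assms(3) skip(1) unfolding following_invariant_def by auto
    moreover have "E u v" using u assms(2) unfolding simple_graph_def by auto
    ultimately have "f u = v" using leaf_neighbour_unique[OF assms(2)] by blast
    with \<open>lab (f u) = Followee\<close> unl skip show False by simp
  qed
qed simp

lemma fol_run_invariant:
  assumes "fol_run n E s vs s'" "simple_graph n E" "following_invariant n E s"
  shows "following_invariant n E s' \<and> (\<forall>v\<in>set vs. deg n E v = 1 \<longrightarrow> fst s' v \<noteq> Unlabeled)"
  using assms
proof (induction rule: fol_run.induct)
  case (cons s v s' vs s'')
  have "following_invariant n E s'" using fol_step_invariant cons.hyps(1) cons.prems by blast
  moreover have "fst s'' w \<noteq> Unlabeled" if "fst s' w \<noteq> Unlabeled" for w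
    using cons.hyps(2) that by induction (auto dest: fol_step_keeps_labels)
  ultimately show ?case
    using cons fol_step_labels_leaf[OF cons.hyps(1) cons.prems] by auto
qed simp

lemma following_output_structure:
  assumes "simple_graph n E" "following_output n E C"
  obtains fol f where "follower_structure n E fol f" "C = follower_communities n fol f"
proof -
  obtain vs s f0 where vs: "degree_order n E vs" and run: "fol_run n E (\<lambda>_. Unlabeled, f0) vs s"
    and C: "C = following_partition n s"
    using assms(2) unfolding following_output_def by blast
  have "following_invariant n E (\<lambda>_. Unlabeled, f0)" unfolding following_invariant_def by auto
  from fol_run_invariant[OF run assms(1) this] vs
  have inv: "following_invariant n E s"
    and leaves: "\<forall>v\<in>{1..n}. deg n E v = 1 \<longrightarrow> fst s v \<noteq> Unlabeled"
    unfolding degree_order_def by auto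
  define fol where "fol v \<longleftrightarrow> fst s v = Follower" for v
  have "follower_structure n E fol (snd s)"
    using inv leaves label_cases_labelled
    unfolding follower_structure_def following_invariant_def fol_def by fastforce
  moreover have "C = follower_communities n fol (snd s)"
    unfolding C following_partition_def follower_communities_def follower_community_def
      Let_def fol_def
    by (rule image_cong) (auto split: if_splits intro: label_cases_labelled)
  ultimately show ?thesis using that by blast
qed

definition same_community :: "'a set set \<Rightarrow> 'a \<Rightarrow> 'a \<Rightarrow> real" where
  "same_community C i j = (if \<exists>c\<in>C. i \<in> c \<and> j \<in> c then 1 else 0)"

lemma modularity_split:
  "modularity n E C =
     ((\<Sum>i\<in>{1..n}. \<Sum>j\<in>{1..n}. adjm E i j * same_community C i j)
      - (\<Sum>i\<in>{1..n}. \<Sum>j\<in>{1..n}. real (deg n E i) * real (deg n E j) * same_community C i j)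
        / (2 * real (num_edges n E)))
     / (2 * real (num_edges n E))"
proof -
  let ?m = "real (num_edges n E)" and ?d = "\<lambda>i. real (deg n E i)"
  have "(\<Sum>i\<in>{1..n}. \<Sum>j\<in>{1..n}. (adjm E i j - ?d i * ?d j / (2 * ?m)) * same_community C i j)
      = (\<Sum>i\<in>{1..n}. \<Sum>j\<in>{1..n}. adjm E i j * same_community C i j
           - ?d i * ?d j * same_community C i j / (2 * ?m))"
    by (simp add: algebra_simps)
  then show ?thesis
    unfolding modularity_def Let_def same_community_def
    by (simp add: sum_subtractf sum_divide_distrib)
qed

text \<open>If every element of \<open>F\<close> is matched by \<open>g\<close> to an element outside \<open>F\<close>, and a nonnegative
  pair weight is at least 1 on both orientations of each matched pair, then the total weight
  is at least \<open>2 |F|\<close>: the pairs \<open>(v, g v)\<close> and \<open>(g w, w)\<close> never coincide.\<close>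

lemma matched_pairs_weight:
  fixes h :: "'a \<Rightarrow> 'a \<Rightarrow> real"
  assumes V: "finite V" and FV: "F \<subseteq> V"
    and g: "\<And>v. v \<in> F \<Longrightarrow> g v \<in> V - F"
    and nonneg: "\<And>i j. i \<in> V \<Longrightarrow> j \<in> V \<Longrightarrow> h i j \<ge> 0"
    and hit: "\<And>v. v \<in> F \<Longrightarrow> h v (g v) \<ge> 1 \<and> h (g v) v \<ge> 1"
  shows "2 * real (card F) \<le> (\<Sum>i\<in>V. \<Sum>j\<in>V. h i j)"
proof -
  define ind where "ind i j = (if i \<in> F \<and> j = g i then 1 else (0::real))" for i j
  have below: "ind i j + ind j i \<le> h i j" if "i \<in> V" "j \<in> V" for i j
    using nonneg[OF that] hit[of i] hit[of j] g[of i] g[of j] unfolding ind_def by auto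
  have "(\<Sum>j\<in>V. ind i j) = (if i \<in> F then 1 else 0)" for i
    using g[of i] V unfolding ind_def by (cases "i \<in> F") auto
  then have total: "(\<Sum>i\<in>V. \<Sum>j\<in>V. ind i j) = real (card F)"
    using V FV by (simp add: sum.If_cases Int_absorb1)
  have "2 * real (card F) = (\<Sum>i\<in>V. \<Sum>j\<in>V. ind i j + ind j i)"
    using total sum.swap[of "\<lambda>i j. ind j i" V V] by (simp add: sum.distrib)
  also have "\<dots> \<le> (\<Sum>i\<in>V. \<Sum>j\<in>V. h i j)"
    by (intro sum_mono below)
  finally show ?thesis .
qed

text \<open>For nonnegative weights, the weight of pairs sharing a community is at most the sum of
  squared community volumes (communities may overlap; each shared one is counted).\<close>

lemma same_community_weight_le:
  fixes w :: "'a \<Rightarrow> real"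
  assumes C: "finite C" and V: "finite V" and w: "\<And>i. i \<in> V \<Longrightarrow> w i \<ge> 0"
  shows "(\<Sum>i\<in>V. \<Sum>j\<in>V. w i * w j * same_community C i j) \<le> (\<Sum>c\<in>C. (\<Sum>i\<in>V \<inter> c. w i) ^ 2)"
proof -
  define ic where "ic (i::'a) c = (if i \<in> c then 1 else (0::real))" for i c
  have delta_le: "same_community C i j \<le> (\<Sum>c\<in>C. ic i c * ic j c)" for i j
  proof (cases "\<exists>c\<in>C. i \<in> c \<and> j \<in> c")
    case True
    then obtain c where c: "c \<in> C" "i \<in> c" "j \<in> c" by blast
    have "ic i c * ic j c \<le> (\<Sum>c\<in>C. ic i c * ic j c)"
      by (rule member_le_sum) (use c C in \<open>auto simp: ic_def\<close>)
    then show ?thesis using c unfolding same_community_def ic_def by auto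
  qed (auto simp: same_community_def ic_def intro: sum_nonneg)
  have "(\<Sum>i\<in>V. \<Sum>j\<in>V. w i * w j * same_community C i j)
      \<le> (\<Sum>i\<in>V. \<Sum>j\<in>V. \<Sum>c\<in>C. (w i * ic i c) * (w j * ic j c))"
    by (intro sum_mono)
      (simp add: sum_distrib_left mult_ac mult_left_mono delta_le w zero_le_mult_iff
         flip: sum_distrib_left)
  also have "\<dots> = (\<Sum>c\<in>C. \<Sum>i\<in>V. \<Sum>j\<in>V. (w i * ic i c) * (w j * ic j c))"
    by (simp only: sum.swap[of _ C V] sum.swap[of _ C])
  also have "\<dots> = (\<Sum>c\<in>C. (\<Sum>i\<in>V. w i * ic i c) ^ 2)"
    by (simp only: power2_eq_square sum_product)
  also have "\<dots> = (\<Sum>c\<in>C. (\<Sum>i\<in>V \<inter> c. w i) ^ 2)"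
    by (simp add: sum.inter_restrict V ic_def if_distrib cong: if_cong)
  finally show ?thesis .
qed

text \<open>Edge part: each follower edge is counted in both orientations inside one community.\<close>

lemma follower_edges_weight:
  assumes sg: "simple_graph n E" and st: "follower_structure n E fol f"
  shows "2 * real (card {v \<in> {1..n}. fol v})
         \<le> (\<Sum>i\<in>{1..n}. \<Sum>j\<in>{1..n}. adjm E i j * same_community (follower_communities n fol f) i j)"
proof (rule matched_pairs_weight[where g = f])
  fix v assume "v \<in> {v \<in> {1..n}. fol v}"
  then have v: "v \<in> {1..n}" "fol v" and e: "E v (f v)" "\<not> fol (f v)"
    using st unfolding follower_structure_def by auto
  have fv: "f v \<in> {1..n}" and e_back: "E (f v) v" using e sg unfolding simple_graph_def by auto
  have "follower_community n fol f (f v) \<in> follower_communities n fol f"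
    using fv e unfolding follower_communities_def by auto
  moreover have "v \<in> follower_community n fol f (f v)" "f v \<in> follower_community n fol f (f v)"
    using v unfolding follower_community_def by auto
  ultimately have "same_community (follower_communities n fol f) v (f v) = 1"
    "same_community (follower_communities n fol f) (f v) v = 1"
    unfolding same_community_def by auto
  then show "1 \<le> adjm E v (f v) * same_community (follower_communities n fol f) v (f v) \<and>
         1 \<le> adjm E (f v) v * same_community (follower_communities n fol f) (f v) v"
    using e e_back unfolding adjm_def by simp
  show "f v \<in> {1..n} - {v \<in> {1..n}. fol v}" using fv e by simp
qed (auto simp: adjm_def same_community_def)

text \<open>The volume of the community of \<open>u\<close> is at most \<open>2 d_u\<close>: its followers are distinct
  neighbours of \<open>u\<close>, each of degree at most one.\<close>

lemma community_volume_le: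
  assumes sg: "simple_graph n E" and st: "follower_structure n E fol f"
    and u: "u \<in> {1..n}" "\<not> fol u"
  shows "(\<Sum>i\<in>{1..n} \<inter> follower_community n fol f u. real (deg n E i)) \<le> 2 * real (deg n E u)"
proof -
  define Fs where "Fs = {v \<in> {1..n}. fol v \<and> f v = u}"
  have "{1..n} \<inter> follower_community n fol f u = insert u Fs" "u \<notin> Fs"
    using u unfolding follower_community_def Fs_def by auto
  then have "(\<Sum>i\<in>{1..n} \<inter> follower_community n fol f u. real (deg n E i))
      = real (deg n E u) + (\<Sum>i\<in>Fs. real (deg n E i))"
    by (simp add: Fs_def)
  also have "(\<Sum>i\<in>Fs. real (deg n E i)) \<le> (\<Sum>i\<in>Fs. 1)"
    using st unfolding Fs_def follower_structure_def by (intro sum_mono) auto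
  also have "(\<Sum>i\<in>Fs. 1) \<le> real (deg n E u)"
  proof -
    have "Fs \<subseteq> {j \<in> {1..n}. E u j}"
      using st sg unfolding Fs_def follower_structure_def simple_graph_def by auto
    then have "card Fs \<le> deg n E u" unfolding deg_def by (intro card_mono) auto
    then show ?thesis by simp
  qed
  finally show ?thesis by simp
qed

lemma follower_degree_weight:
  assumes sg: "simple_graph n E" and st: "follower_structure n E fol f"
  shows "(\<Sum>i\<in>{1..n}. \<Sum>j\<in>{1..n}.
            real (deg n E i) * real (deg n E j) * same_community (follower_communities n fol f) i j)
         \<le> 4 * (\<Sum>i\<in>{1..n}. real (deg n E i) ^ 2)"
proof -
  let ?d = "\<lambda>i. real (deg n E i)" and ?U = "{u \<in> {1..n}. \<not> fol u}"
    and ?vol = "\<lambda>c. (\<Sum>i\<in>{1..n} \<inter> c. real (deg n E i))"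
  have "(\<Sum>i\<in>{1..n}. \<Sum>j\<in>{1..n}. ?d i * ?d j * same_community (follower_communities n fol f) i j)
      \<le> (\<Sum>c\<in>follower_communities n fol f. ?vol c ^ 2)"
    unfolding follower_communities_def by (intro same_community_weight_le) auto
  also have "\<dots> \<le> (\<Sum>u\<in>?U. ?vol (follower_community n fol f u) ^ 2)"
    unfolding follower_communities_def using sum_image_le[of ?U "\<lambda>c. ?vol c ^ 2"]
    by (simp add: o_def)
  also have "\<dots> \<le> (\<Sum>u\<in>?U. (2 * ?d u) ^ 2)"
    using community_volume_le[OF sg st]
    by (intro sum_mono power_mono) (auto intro: sum_nonneg)
  also have "\<dots> \<le> (\<Sum>u\<in>{1..n}. (2 * ?d u) ^ 2)"
    by (intro sum_mono2) auto
  also have "\<dots> = 4 * (\<Sum>i\<in>{1..n}. ?d i ^ 2)"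
    by (simp add: power_mult_distrib sum_distrib_left)
  finally show ?thesis .
qed

text \<open>Every leaf is a follower or is followed, so there are at most twice as many leaves as
  followers.\<close>

lemma leaves_le_twice_followers:
  assumes sg: "simple_graph n E" and st: "follower_structure n E fol f"
  shows "card {i \<in> {1..n}. deg n E i = 1} \<le> 2 * card {v \<in> {1..n}. fol v}"
proof -
  let ?Fol = "{v \<in> {1..n}. fol v}"
  have "{i \<in> {1..n}. deg n E i = 1} \<subseteq> ?Fol \<union> f ` ?Fol"
  proof
    fix w assume w: "w \<in> {i \<in> {1..n}. deg n E i = 1}"
    show "w \<in> ?Fol \<union> f ` ?Fol"
    proof (cases "fol w")
      case False
      then obtain x where x: "fol x" "f x = w" using st w unfolding follower_structure_def by auto
      then have "E x (f x)" using st unfolding follower_structure_def by auto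
      then have "x \<in> ?Fol" using x sg unfolding simple_graph_def by auto
      then show ?thesis using x by blast
    qed (use w in auto)
  qed
  then have "card {i \<in> {1..n}. deg n E i = 1} \<le> card (?Fol \<union> f ` ?Fol)"
    by (intro card_mono) auto
  also have "\<dots> \<le> card ?Fol + card (f ` ?Fol)" by (rule card_Un_le)
  also have "\<dots> \<le> 2 * card ?Fol" using card_image_le[of ?Fol f] by simp
  finally show ?thesis .
qed

theorem follower_structure_modularity_bound:
  assumes sg: "simple_graph n E" and m: "num_edges n E \<ge> 1"
    and st: "follower_structure n E fol f"
  shows "modularity n E (follower_communities n fol f) \<ge>
           real (card {i \<in> {1..n}. deg n E i = 1}) / (2 * real (num_edges n E))
           - (\<Sum>i\<in>{1..n}. real (deg n E i) ^ 2) / real (num_edges n E) ^ 2"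
proof -
  define m where "m = real (num_edges n E)"
  define F where "F = real (card {v \<in> {1..n}. fol v})"
  define L where "L = real (card {i \<in> {1..n}. deg n E i = 1})"
  define S where "S = (\<Sum>i\<in>{1..n}. real (deg n E i) ^ 2)"
  define C where "C = follower_communities n fol f"
  define X where "X = (\<Sum>i\<in>{1..n}. \<Sum>j\<in>{1..n}. adjm E i j * same_community C i j)"
  define Y where "Y = (\<Sum>i\<in>{1..n}. \<Sum>j\<in>{1..n}.
                         real (deg n E i) * real (deg n E j) * same_community C i j)"
  have m1: "m \<ge> 1" using m unfolding m_def by simp
  have X: "2 * F \<le> X" using follower_edges_weight[OF sg st] unfolding X_def F_def C_def .
  have Y: "Y \<le> 4 * S" using follower_degree_weight[OF sg st] unfolding Y_def S_def C_def .
  have L: "L \<le> 2 * F"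
    using leaves_le_twice_followers[OF sg st] unfolding L_def F_def by linarith
  have "Y / (2 * m) \<le> 4 * S / (2 * m)" using Y m1 by (intro divide_right_mono) auto
  then have "(2 * F - 4 * S / (2 * m)) / (2 * m) \<le> (X - Y / (2 * m)) / (2 * m)"
    using X m1 by (intro divide_right_mono) auto
  moreover have "(2 * F - 4 * S / (2 * m)) / (2 * m) = F / m - S / m ^ 2"
    using m1 by (simp add: field_simps power2_eq_square)
  moreover have "L / (2 * m) \<le> F / m" using L m1 by (simp add: field_simps)
  ultimately have "L / (2 * m) - S / m ^ 2 \<le> (X - Y / (2 * m)) / (2 * m)" by linarith
  then show ?thesis
    unfolding modularity_split X_def Y_def C_def L_def S_def m_def .
qed

theorem mainTheorem6:
  fixes n :: nat and E :: "nat \<Rightarrow> nat \<Rightarrow> bool" and C :: "nat set set"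
  assumes "simple_graph n E"
    and "\<forall>i\<in>{1..n}. deg n E i \<ge> 1"
    and "num_edges n E \<ge> 1"
    and "following_output n E C"
  shows "modularity n E C \<ge>
           real (card {i \<in> {1..n}. deg n E i = 1}) / (2 * real (num_edges n E))
           - (\<Sum>i\<in>{1..n}. real (deg n E i) ^ 2) / real (num_edges n E) ^ 2"
proof -
  obtain fol f where "follower_structure n E fol f" "C = follower_communities n fol f"
    using following_output_structure[OF assms(1,4)] .
  then show ?thesis using follower_structure_modularity_bound[OF assms(1,3)] by simp
qed

end
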